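(* Let $\Sigma$ be an alphabet, $L\subseteq\Sigma^*$ with $|L|\ge 2$, and $R:=\mathrm{lcs}(L)$. Fix any $xR\in L\setminus\{R\}$. Then there is some $yR\in L\setminus\{R\}$ such that $\mathrm{lcsext}(L)=\mathrm{lcs}(x^{\overleftarrow{\omega}},y^{\overleftarrow{\omega}})=\mathrm{lcs}(x^{\overleftarrow{\omega}},y^{\overleftarrow{\omega}},z^{\overleftarrow{\omega}})$ for all $zR\in L$. Moreover, if $xy=yx$, then $R\in L$.
   Context: Add a greatest element $\top$ to the words. For $w\in\Sigma^+$, $u\in\Sigma^*$, $w^{\overleftarrow{\omega}}u$ denotes the left-infinite (ultimately left-periodic) word $\cdots wwwu$; set $\varepsilon^{\overleftarrow{\omega}}:=\top$ and $\top w=w\top=\top$. The suffix order $u\preceq v$ means $u$ is a suffix of $v$, on finite words, ultimately left-periodic words and $\top$, with $\top$ the greatest element. $\mathrm{lcs}(L)$ (longest common suffix) is the infimum of $L$ w.r.t. this order ($\mathrm{lcs}(\emptyset)=\top$). For $L\subseteq\Sigma^*$ with $R=\mathrm{lcs}(L)$, the maximal suffix extension is $\mathrm{lcsext}(L):=\mathrm{lcs}(\{z^{\overleftarrow{\omega}}\mid zR\in L\})$. *)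

theory Defs
  imports Main "HOL-Library.Sublist"
begin

text \<open>Extended words: finite words, left-infinite words (read right to left:
  Inf f denotes ... f 2 f 1 f 0), and a greatest element Top.\<close>
datatype 'a xword = Fin "'a list" | Inf "nat \<Rightarrow> 'a" | Top

fun sfx :: "'a xword \<Rightarrow> 'a xword \<Rightarrow> bool" where
  "sfx _ Top = True"
| "sfx Top _ = False"
| "sfx (Fin u) (Fin v) = suffix u v"
| "sfx (Fin u) (Inf f) = (\<forall>i<length u. rev u ! i = f i)"
| "sfx (Inf f) (Inf g) = (f = g)"
| "sfx (Inf f) (Fin v) = False"

definition lomega :: "'a list \<Rightarrow> 'a xword" where
  "lomega z = (if z = [] then Top else Inf (\<lambda>i. rev z ! (i mod length z)))"

definition is_lcs :: "'a xword set \<Rightarrow> 'a xword \<Rightarrow> bool" where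
  "is_lcs S m \<longleftrightarrow> (\<forall>v\<in>S. sfx m v) \<and> (\<forall>m'. (\<forall>v\<in>S. sfx m' v) \<longrightarrow> sfx m' m)"

definition lcs :: "'a xword set \<Rightarrow> 'a xword" where
  "lcs S = (THE m. is_lcs S m)"

definition lcsext :: "'a list set \<Rightarrow> 'a xword" where
  "lcsext L = lcs {lomega z | z. \<exists>R. lcs (Fin ` L) = Fin R \<and> z @ R \<in> L}"

end

(*
  Compare every left-infinite power z^omega (z R in L, z nonempty) with x^omega. If some of
  them disagrees with x^omega, let y realize the earliest position k of disagreement: then every
  set of such words containing x^omega and y^omega has the same longest common suffix, namely
  the length-k suffix of x^omega. Otherwise all of them equal x^omega and we take y = x; then all
  words z R in L other than R end in the same letter, so R must belong to L, since otherwise the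
  longest common suffix R could be extended by that letter. Commuting x and y are powers of a
  common word, hence x^omega = y^omega, which forces the second case.
*)
theory Submission
  imports Defs
begin

lemma sfx_refl: "sfx a a"
  by (cases a) auto

lemma sfx_antisym: "sfx a b \<Longrightarrow> sfx b a \<Longrightarrow> a = b"
  by (cases a; cases b) (auto intro: suffix_order.antisym)

lemma lcs_eqI: "is_lcs S m \<Longrightarrow> lcs S = m"
  unfolding lcs_def by (rule the_equality) (auto simp: is_lcs_def intro: sfx_antisym)

lemma is_lcs_lcs_Fin_image:
  assumes "L \<noteq> {}"
  shows "is_lcs (Fin ` L) (lcs (Fin ` L))"
proof -
  obtain w where "w \<in> L" using assms by blast
  define common where "common v \<longleftrightarrow> (\<forall>u\<in>L. suffix v u)" for v
  obtain R where R: "common R" and longest: "\<And>v. common v \<Longrightarrow> length v \<le> length R"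
    using Lattices_Big.ex_has_greatest_nat[of common "[]" length "Suc (length w)"] \<open>w \<in> L\<close>
    by (fastforce simp: common_def dest: suffix_length_le)
  have "sfx m (Fin R)" if lb: "\<forall>u\<in>Fin ` L. sfx m u" for m
  proof (cases m)
    case (Fin v)
    then have "common v" using lb by (auto simp: common_def)
    then show ?thesis
      using Fin R longest \<open>w \<in> L\<close> by (auto simp: common_def intro: suffix_length_suffix)
  qed (use lb \<open>w \<in> L\<close> in auto)
  with R have "is_lcs (Fin ` L) (Fin R)" by (auto simp: is_lcs_def common_def)
  then show ?thesis by (simp add: lcs_eqI)
qed

lemma lcs_Fin_mem_if_same_last:
  assumes lcs: "lcs (Fin ` L) = Fin R" and "L \<noteq> {}"
    and last: "\<And>z. z @ R \<in> L \<Longrightarrow> z \<noteq> [] \<Longrightarrow> last z = a"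
  shows "R \<in> L"
proof (rule ccontr)
  assume "R \<notin> L"
  have is_lcs: "is_lcs (Fin ` L) (Fin R)"
    using is_lcs_lcs_Fin_image[OF \<open>L \<noteq> {}\<close>] lcs by simp
  have "suffix (a # R) u" if "u \<in> L" for u
  proof -
    have "suffix R u" using is_lcs that by (auto simp: is_lcs_def)
    then obtain z where u: "u = z @ R" by (auto simp: suffix_def)
    with \<open>R \<notin> L\<close> that have "z \<noteq> []" by auto
    then have "z = butlast z @ [a]" using last that u by (metis append_butlast_last_id)
    then show ?thesis using u by (metis append.assoc append_Cons append_Nil suffixI)
  qed
  then have "\<forall>v\<in>Fin ` L. sfx (Fin (a # R)) v" by auto
  then have "sfx (Fin (a # R)) (Fin R)" using is_lcs unfolding is_lcs_def by blast
  then show False by (auto dest: suffix_length_le)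
qed

definition fin_suffix :: "(nat \<Rightarrow> 'a) \<Rightarrow> nat \<Rightarrow> 'a xword" where
  "fin_suffix f k = Fin (rev (map f [0..<k]))"

lemma sfx_fin_suffix_Inf_iff: "sfx (fin_suffix f k) (Inf g) \<longleftrightarrow> (\<forall>i<k. g i = f i)"
  by (auto simp: fin_suffix_def rev_nth)

lemma sfx_fin_suffix_if_Inf_differ:
  assumes f: "sfx (Fin v) (Inf f)" and g: "sfx (Fin v) (Inf g)" and "f k \<noteq> g k"
  shows "sfx (Fin v) (fin_suffix f k)"
proof -
  have "length v \<le> k"
  proof (rule ccontr)
    assume "\<not> length v \<le> k"
    then show False using f g \<open>f k \<noteq> g k\<close> by auto
  qed
  then have "rev v = take (length v) (map f [0..<k])"
    using f by (intro nth_equalityI) auto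
  then have "prefix (rev v) (map f [0..<k])" by (metis take_is_prefix)
  then show ?thesis by (simp add: fin_suffix_def suffix_to_prefix)
qed

lemma is_lcs_fin_suffix:
  assumes "Inf f \<in> S" "Inf g \<in> S" "f k \<noteq> g k" "\<forall>v\<in>S. sfx (fin_suffix f k) v"
  shows "is_lcs S (fin_suffix f k)"
  unfolding is_lcs_def
proof (intro conjI allI impI)
  show "\<forall>v\<in>S. sfx (fin_suffix f k) v" by (fact assms(4))
  fix m assume "\<forall>v\<in>S. sfx m v"
  then have f: "sfx m (Inf f)" and g: "sfx m (Inf g)" using assms(1,2) by auto
  show "sfx m (fin_suffix f k)"
  proof (cases m)
    case (Fin v)
    then show ?thesis using f g assms(3) by (metis sfx_fin_suffix_if_Inf_differ)
  next
    case (Inf h)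
    then show ?thesis using f g assms(3) by simp
  next
    case Top
    then show ?thesis using f by simp
  qed
qed

lemma is_lcs_Inf: "Inf f \<in> S \<Longrightarrow> S \<subseteq> {Inf f, Top} \<Longrightarrow> is_lcs S (Inf f)"
  unfolding is_lcs_def by (auto simp: sfx_refl)

text \<open>The second word \<open>g\<close> is one that differs from \<open>f\<close> at the earliest position where any
  member of \<open>S\<close> does.\<close>
lemma lcs_Inf_determined_by_pair:
  assumes f: "Inf f \<in> S" and S: "S \<subseteq> range Inf \<union> {Top}"
  obtains g where "Inf g \<in> S" "g = f \<Longrightarrow> S \<subseteq> {Inf f, Top}"
    "\<And>T. {Inf f, Inf g} \<subseteq> T \<Longrightarrow> T \<subseteq> S \<Longrightarrow> lcs T = lcs {Inf f, Inf g}"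
proof (cases "\<exists>k g. Inf g \<in> S \<and> g k \<noteq> f k")
  case True
  then obtain k where "\<exists>g. Inf g \<in> S \<and> g k \<noteq> f k"
    and least: "\<forall>i<k. \<not> (\<exists>h. Inf h \<in> S \<and> h i \<noteq> f i)"
    by (subst (asm) exists_least_iff) blast
  then obtain g where g: "Inf g \<in> S" "g k \<noteq> f k"
    by blast
  have "sfx (fin_suffix f k) v" if "v \<in> S" for v
    using that S least by (auto simp: sfx_fin_suffix_Inf_iff)
  then have lcs_T: "lcs T = fin_suffix f k" if "{Inf f, Inf g} \<subseteq> T" "T \<subseteq> S" for T
    using that g by (intro lcs_eqI is_lcs_fin_suffix[of f _ g]) auto
  show ?thesis
  proof (rule that[of g])
    show "lcs T = lcs {Inf f, Inf g}" if "{Inf f, Inf g} \<subseteq> T" "T \<subseteq> S" for T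
      using lcs_T[OF that] lcs_T[of "{Inf f, Inf g}"] f g by simp
  qed (use g in auto)
next
  case False
  then have "h = f" if "Inf h \<in> S" for h
    using that by blast
  with S have "S \<subseteq> {Inf f, Top}"
    by blast
  then have lcs_T: "lcs T = Inf f" if "Inf f \<in> T" "T \<subseteq> S" for T
    using that by (intro lcs_eqI is_lcs_Inf) auto
  show ?thesis
  proof (rule that[of f])
    show "lcs T = lcs {Inf f, Inf f}" if "{Inf f, Inf f} \<subseteq> T" "T \<subseteq> S" for T
      using lcs_T that f by simp
  qed (use f \<open>S \<subseteq> {Inf f, Top}\<close> in auto)
qed

lemma lomega_Nil [simp]: "lomega [] = Top"
  by (simp add: lomega_def)

lemma lomega_eq_Top_iff [simp]: "lomega z = Top \<longleftrightarrow> z = []"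
  by (simp add: lomega_def)

lemma lomega_in_range: "lomega z \<in> range Inf \<union> {Top}"
  by (simp add: lomega_def)

lemma last_eq_if_lomega_eq: "lomega z = lomega x \<Longrightarrow> x \<noteq> [] \<Longrightarrow> last z = last x"
  by (cases x rule: rev_cases; cases z rule: rev_cases) (auto simp: lomega_def dest: fun_cong[of _ _ 0])

lemma nth_concat_replicate:
  "j < m * length w \<Longrightarrow> concat (replicate m w) ! j = w ! (j mod length w)"
proof (induction m arbitrary: j)
  case (Suc m)
  then show ?case
    by (cases "j < length w") (auto simp: nth_append mod_if)
qed simp

lemma lomega_concat_replicate:
  assumes "m > 0"
  shows "lomega (concat (replicate m w)) = lomega w"
proof (cases "w = []")
  case False
  have len: "length (concat (replicate m w)) = m * length w"
    by (simp add: length_concat sum_list_replicate)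
  have "rev (concat (replicate m w)) ! (i mod (m * length w)) = rev w ! (i mod length w)" for i
  proof -
    have "i mod (m * length w) < m * length w"
      using assms False by simp
    then have "concat (replicate m (rev w)) ! (i mod (m * length w))
        = rev w ! (i mod (m * length w) mod length w)"
      by (simp add: nth_concat_replicate)
    also have "\<dots> = rev w ! (i mod length w)"
      by (simp add: mod_mod_cancel)
    finally show ?thesis
      by (simp add: rev_concat)
  qed
  with assms False len show ?thesis
    by (simp add: lomega_def)
qed simp

lemma lomega_eq_if_comm:
  assumes "x @ y = y @ x" "x \<noteq> []" "y \<noteq> []"
  shows "lomega x = lomega y"
proof -
  obtain m n w where x: "concat (replicate m w) = x" and y: "concat (replicate n w) = y"
    using comm_append_are_replicate[OF assms(1)] by blast
  moreover have "m > 0" "n > 0"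
    using x y assms(2,3) by (auto intro!: gr0I)
  ultimately show ?thesis
    by (metis lomega_concat_replicate)
qed

lemma lcs_lomega_determined_by_pair:
  assumes "x \<in> Z" "x \<noteq> []"
  obtains y where "y \<in> Z" "y \<noteq> []"
    "\<And>z. lomega y = lomega x \<Longrightarrow> z \<in> Z \<Longrightarrow> z \<noteq> [] \<Longrightarrow> lomega z = lomega x"
    "\<And>T. {lomega x, lomega y} \<subseteq> T \<Longrightarrow> T \<subseteq> lomega ` Z \<Longrightarrow> lcs T = lcs {lomega x, lomega y}"
proof -
  obtain f where f: "lomega x = Inf f"
    using lomega_in_range[of x] \<open>x \<noteq> []\<close> by auto
  have "Inf f \<in> lomega ` Z"
    using \<open>x \<in> Z\<close> f by force
  moreover have "lomega ` Z \<subseteq> range Inf \<union> {Top}"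
    using lomega_in_range by blast
  ultimately obtain g where g: "Inf g \<in> lomega ` Z" and eq: "g = f \<Longrightarrow> lomega ` Z \<subseteq> {Inf f, Top}"
    and pair: "\<And>T. {Inf f, Inf g} \<subseteq> T \<Longrightarrow> T \<subseteq> lomega ` Z \<Longrightarrow> lcs T = lcs {Inf f, Inf g}"
    by (rule lcs_Inf_determined_by_pair) blast
  from g obtain y where y: "y \<in> Z" "Inf g = lomega y" ..
  show ?thesis
  proof (rule that[of y])
    show "y \<noteq> []" using y(2) by auto
    show "lomega z = lomega x" if "lomega y = lomega x" "z \<in> Z" "z \<noteq> []" for z
      using that f y(2) eq by auto
  qed (use y f pair in auto)
qed

lemma lcsext_eq:
  "lcs (Fin ` L) = Fin R \<Longrightarrow> lcsext L = lcs (lomega ` {z. z @ R \<in> L})"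
  unfolding lcsext_def by (auto intro: arg_cong[where f = lcs])

theorem lemma4:
  fixes L :: "'a list set" and R x :: "'a list"
  assumes two: "\<exists>u\<in>L. \<exists>v\<in>L. u \<noteq> v"
    and R: "lcs (Fin ` L) = Fin R"
    and x: "x @ R \<in> L" "x @ R \<noteq> R"
  shows "\<exists>y. y @ R \<in> L \<and> y @ R \<noteq> R
           \<and> lcsext L = lcs {lomega x, lomega y}
           \<and> (\<forall>z. z @ R \<in> L \<longrightarrow> lcs {lomega x, lomega y} = lcs {lomega x, lomega y, lomega z})
           \<and> (x @ y = y @ x \<longrightarrow> R \<in> L)"
proof -
  define Z where "Z = {z. z @ R \<in> L}"
  have "x \<in> Z" "x \<noteq> []" using x by (auto simp: Z_def)
  then obtain y where y: "y \<in> Z" "y \<noteq> []"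
    and same: "\<And>z. lomega y = lomega x \<Longrightarrow> z \<in> Z \<Longrightarrow> z \<noteq> [] \<Longrightarrow> lomega z = lomega x"
    and pair: "\<And>T. {lomega x, lomega y} \<subseteq> T \<Longrightarrow> T \<subseteq> lomega ` Z \<Longrightarrow> lcs T = lcs {lomega x, lomega y}"
    by (rule lcs_lomega_determined_by_pair) blast
  have "lcsext L = lcs {lomega x, lomega y}"
    using lcsext_eq[OF R] pair[of "lomega ` Z"] \<open>x \<in> Z\<close> y(1) by (simp add: Z_def)
  moreover have "lcs {lomega x, lomega y} = lcs {lomega x, lomega y, lomega z}" if "z \<in> Z" for z
    using pair[of "{lomega x, lomega y, lomega z}"] \<open>x \<in> Z\<close> y(1) that by simp
  moreover have "R \<in> L" if "x @ y = y @ x"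
  proof (rule lcs_Fin_mem_if_same_last[OF R])
    show "L \<noteq> {}" using x(1) by blast
    show "last z = last x" if "z @ R \<in> L" "z \<noteq> []" for z
    proof (rule last_eq_if_lomega_eq[OF _ \<open>x \<noteq> []\<close>])
      show "lomega z = lomega x"
        using same[OF lomega_eq_if_comm[OF \<open>x @ y = y @ x\<close> \<open>x \<noteq> []\<close> \<open>y \<noteq> []\<close>, symmetric]]
          that by (simp add: Z_def)
    qed
  qed
  ultimately show ?thesis
    using y unfolding Z_def by blast
qed

end
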